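(* Let $A$ be an algebra with non-degenerate product, $\Delta$ a regular comultiplication on $A$, and suppose there exists a left integral $\varphi$ on $(A,\Delta)$. Then for any finitely many elements $a_1,\dots,a_n\in A$ there exists $e\in A$ with $a_ie=ea_i=a_i$ for all $i$.
   Context: All algebras are over $\mathbb C$, associative, possibly without identity, with non-degenerate product. $M(A)$ denotes the multiplier algebra and $\iota$ the identity map. A regular comultiplication is a linear map $\Delta:A\to M(A\otimes A)$, not assumed multiplicative, such that: - $\Delta(a)(1\otimes b)$, $(a\otimes1)\Delta(b)$, $\Delta(a)(b\otimes1)$ and $(1\otimes a)\Delta(b)$ all lie in $A\otimes A$; - $(a\otimes1\otimes1)(\Delta\otimes\iota)(\Delta(b)(1\otimes c))=(\iota\otimes\Delta)((a\otimes1)\Delta(b))(1\otimes1\otimes c)$. A left integral is a nonzero linear functional $\varphi$ on $A$ with $(\iota\otimes\varphi)\Delta(a)=\varphi(a)1$ in $M(A)$ for all $a\in A$. Here $(\iota\otimes\varphi)\Delta(a)$ is the multiplier with $((\iota\otimes\varphi)\Delta(a))b=(\iota\otimes\varphi)(\Delta(a)(b\otimes1))$ and $b((\iota\otimes\varphi)\Delta(a))=(\iota\otimes\varphi)((b\otimes1)\Delta(a))$. *)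

theory Defs
  imports Complex_Main
begin

text \<open>
  Elements of the algebraic tensor
  products A (x) A and A (x) A (x) A are represented by finite lists of
  simple tensors; two such lists represent the same tensor iff they are
  identified by all products of linear functionals (teq, teq3).
  A multiplier of A (x) A is a pair (L, R) of maps (left and right action).
\<close>

type_synonym 'a tens = "('a \<times> 'a) list"
type_synonym 'a tens3 = "('a \<times> 'a \<times> 'a) list"
type_synonym 'a mult2 = "('a tens \<Rightarrow> 'a tens) \<times> ('a tens \<Rightarrow> 'a tens)"

definition lin_fun :: "(complex \<Rightarrow> 'a::ab_group_add \<Rightarrow> 'a) \<Rightarrow> ('a \<Rightarrow> complex) \<Rightarrow> bool" where
  "lin_fun sc f \<longleftrightarrow> Vector_Spaces.linear sc ((*) :: complex \<Rightarrow> complex \<Rightarrow> complex) f"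

definition nd_algebra :: "(complex \<Rightarrow> 'a::ab_group_add \<Rightarrow> 'a) \<Rightarrow> ('a \<Rightarrow> 'a \<Rightarrow> 'a) \<Rightarrow> bool" where
  "nd_algebra sc mul \<longleftrightarrow>
     vector_space sc \<and>
     (\<forall>x y z. mul (x + y) z = mul x z + mul y z) \<and>
     (\<forall>x y z. mul x (y + z) = mul x y + mul x z) \<and>
     (\<forall>c x y. mul (sc c x) y = sc c (mul x y)) \<and>
     (\<forall>c x y. mul x (sc c y) = sc c (mul x y)) \<and>
     (\<forall>x y z. mul (mul x y) z = mul x (mul y z)) \<and>
     (\<forall>a. (\<forall>b. mul a b = 0) \<longrightarrow> a = 0) \<and>
     (\<forall>a. (\<forall>b. mul b a = 0) \<longrightarrow> a = 0)"

definition teq :: "(complex \<Rightarrow> 'a::ab_group_add \<Rightarrow> 'a) \<Rightarrow> 'a tens \<Rightarrow> 'a tens \<Rightarrow> bool" where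
  "teq sc s t \<longleftrightarrow> (\<forall>f g. lin_fun sc f \<and> lin_fun sc g \<longrightarrow>
      sum_list (map (\<lambda>(x, y). f x * g y) s) = sum_list (map (\<lambda>(x, y). f x * g y) t))"

definition teq3 :: "(complex \<Rightarrow> 'a::ab_group_add \<Rightarrow> 'a) \<Rightarrow> 'a tens3 \<Rightarrow> 'a tens3 \<Rightarrow> bool" where
  "teq3 sc s t \<longleftrightarrow> (\<forall>f g h. lin_fun sc f \<and> lin_fun sc g \<and> lin_fun sc h \<longrightarrow>
      sum_list (map (\<lambda>(x, y, z). f x * g y * h z) s) = sum_list (map (\<lambda>(x, y, z). f x * g y * h z) t))"

definition tadd :: "'a tens \<Rightarrow> 'a tens \<Rightarrow> 'a tens" where
  "tadd s t = s @ t"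

definition tscale :: "(complex \<Rightarrow> 'a \<Rightarrow> 'a) \<Rightarrow> complex \<Rightarrow> 'a tens \<Rightarrow> 'a tens" where
  "tscale sc c s = map (\<lambda>(x, y). (sc c x, y)) s"

definition tmul :: "('a \<Rightarrow> 'a \<Rightarrow> 'a) \<Rightarrow> 'a tens \<Rightarrow> 'a tens \<Rightarrow> 'a tens" where
  "tmul mul s t = concat (map (\<lambda>(x, y). map (\<lambda>(x', y'). (mul x x', mul y y')) t) s)"

definition is_mult2 :: "(complex \<Rightarrow> 'a::ab_group_add \<Rightarrow> 'a) \<Rightarrow> ('a \<Rightarrow> 'a \<Rightarrow> 'a) \<Rightarrow> 'a mult2 \<Rightarrow> bool" where
  "is_mult2 sc mul m \<longleftrightarrow>
     (\<forall>s t. teq sc s t \<longrightarrow> teq sc (fst m s) (fst m t) \<and> teq sc (snd m s) (snd m t)) \<and>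
     (\<forall>s t. teq sc (fst m (tadd s t)) (tadd (fst m s) (fst m t)) \<and>
            teq sc (snd m (tadd s t)) (tadd (snd m s) (snd m t))) \<and>
     (\<forall>c s. teq sc (fst m (tscale sc c s)) (tscale sc c (fst m s)) \<and>
            teq sc (snd m (tscale sc c s)) (tscale sc c (snd m s))) \<and>
     (\<forall>s t. teq sc (fst m (tmul mul s t)) (tmul mul (fst m s) t)) \<and>
     (\<forall>s t. teq sc (snd m (tmul mul s t)) (tmul mul s (snd m t))) \<and>
     (\<forall>s t. teq sc (tmul mul s (fst m t)) (tmul mul (snd m s) t))"

definition meq :: "(complex \<Rightarrow> 'a::ab_group_add \<Rightarrow> 'a) \<Rightarrow> 'a mult2 \<Rightarrow> 'a mult2 \<Rightarrow> bool" where
  "meq sc m m' \<longleftrightarrow> (\<forall>s. teq sc (fst m s) (fst m' s) \<and> teq sc (snd m s) (snd m' s))"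

definition madd :: "'a mult2 \<Rightarrow> 'a mult2 \<Rightarrow> 'a mult2" where
  "madd m m' = (\<lambda>s. tadd (fst m s) (fst m' s), \<lambda>s. tadd (snd m s) (snd m' s))"

definition mscale :: "(complex \<Rightarrow> 'a \<Rightarrow> 'a) \<Rightarrow> complex \<Rightarrow> 'a mult2 \<Rightarrow> 'a mult2" where
  "mscale sc c m = (\<lambda>s. tscale sc c (fst m s), \<lambda>s. tscale sc c (snd m s))"

definition mmul :: "'a mult2 \<Rightarrow> 'a mult2 \<Rightarrow> 'a mult2" where
  "mmul m1 m2 = (fst m1 \<circ> fst m2, snd m2 \<circ> snd m1)"

definition tens_one :: "('a \<Rightarrow> 'a \<Rightarrow> 'a) \<Rightarrow> 'a \<Rightarrow> 'a mult2" where
  "tens_one mul a = (map (\<lambda>(x, y). (mul a x, y)), map (\<lambda>(x, y). (mul x a, y)))"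

definition one_tens :: "('a \<Rightarrow> 'a \<Rightarrow> 'a) \<Rightarrow> 'a \<Rightarrow> 'a mult2" where
  "one_tens mul a = (map (\<lambda>(x, y). (x, mul a y)), map (\<lambda>(x, y). (x, mul y a)))"

text \<open>t in A (x) A represents the multiplier m (i.e. m = t in M(A (x) A));
  m lies in A (x) A iff it is represented by some t.\<close>
definition represents :: "(complex \<Rightarrow> 'a::ab_group_add \<Rightarrow> 'a) \<Rightarrow> ('a \<Rightarrow> 'a \<Rightarrow> 'a) \<Rightarrow> 'a tens \<Rightarrow> 'a mult2 \<Rightarrow> bool" where
  "represents sc mul t m \<longleftrightarrow> (\<forall>s. teq sc (fst m s) (tmul mul t s) \<and> teq sc (snd m s) (tmul mul s t))"

definition in_tens :: "(complex \<Rightarrow> 'a::ab_group_add \<Rightarrow> 'a) \<Rightarrow> ('a \<Rightarrow> 'a \<Rightarrow> 'a) \<Rightarrow> 'a mult2 \<Rightarrow> bool" where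
  "in_tens sc mul m \<longleftrightarrow> (\<exists>t. represents sc mul t m)"

definition rep :: "(complex \<Rightarrow> 'a::ab_group_add \<Rightarrow> 'a) \<Rightarrow> ('a \<Rightarrow> 'a \<Rightarrow> 'a) \<Rightarrow> 'a mult2 \<Rightarrow> 'a tens" where
  "rep sc mul m = (SOME t. represents sc mul t m)"

text \<open>The coassociativity equation
  (a(x)1(x)1)(Delta(x)id)(Delta(b)(1(x)c)) = (id(x)Delta)((a(x)1)Delta(b))(1(x)1(x)c)
  is written out in A (x) A (x) A: if Delta(b)(1(x)c) = sum x_i (x) y_i then the left side
  is sum ((a(x)1)Delta(x_i)) (x) y_i, and if (a(x)1)Delta(b) = sum u_j (x) v_j then the right
  side is sum u_j (x) (Delta(v_j)(1(x)c)).\<close>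
definition regular_comult :: "(complex \<Rightarrow> 'a::ab_group_add \<Rightarrow> 'a) \<Rightarrow> ('a \<Rightarrow> 'a \<Rightarrow> 'a) \<Rightarrow> ('a \<Rightarrow> 'a mult2) \<Rightarrow> bool" where
  "regular_comult sc mul \<Delta> \<longleftrightarrow>
     (\<forall>a. is_mult2 sc mul (\<Delta> a)) \<and>
     (\<forall>a b. meq sc (\<Delta> (a + b)) (madd (\<Delta> a) (\<Delta> b))) \<and>
     (\<forall>c a. meq sc (\<Delta> (sc c a)) (mscale sc c (\<Delta> a))) \<and>
     (\<forall>a b. in_tens sc mul (mmul (\<Delta> a) (one_tens mul b))) \<and>
     (\<forall>a b. in_tens sc mul (mmul (tens_one mul a) (\<Delta> b))) \<and>
     (\<forall>a b. in_tens sc mul (mmul (\<Delta> a) (tens_one mul b))) \<and>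
     (\<forall>a b. in_tens sc mul (mmul (one_tens mul a) (\<Delta> b))) \<and>
     (\<forall>a b c. teq3 sc
        (concat (map (\<lambda>(x, y). map (\<lambda>(p, q). (p, q, y)) (rep sc mul (mmul (tens_one mul a) (\<Delta> x))))
                 (rep sc mul (mmul (\<Delta> b) (one_tens mul c)))))
        (concat (map (\<lambda>(u, v). map (\<lambda>(r, w). (u, r, w)) (rep sc mul (mmul (\<Delta> v) (one_tens mul c))))
                 (rep sc mul (mmul (tens_one mul a) (\<Delta> b))))))"

definition slice2 :: "(complex \<Rightarrow> 'a::ab_group_add \<Rightarrow> 'a) \<Rightarrow> ('a \<Rightarrow> complex) \<Rightarrow> 'a tens \<Rightarrow> 'a" where
  "slice2 sc \<phi> t = sum_list (map (\<lambda>(x, y). sc (\<phi> y) x) t)"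

text \<open>Left integral: nonzero linear functional with (id (x) phi)Delta(a) = phi(a) 1 in M(A),
  i.e. (id(x)phi)(Delta(a)(b(x)1)) = phi(a) b and (id(x)phi)((b(x)1)Delta(a)) = phi(a) b.\<close>
definition left_integral :: "(complex \<Rightarrow> 'a::ab_group_add \<Rightarrow> 'a) \<Rightarrow> ('a \<Rightarrow> 'a \<Rightarrow> 'a) \<Rightarrow> ('a \<Rightarrow> 'a mult2) \<Rightarrow> ('a \<Rightarrow> complex) \<Rightarrow> bool" where
  "left_integral sc mul \<Delta> \<phi> \<longleftrightarrow>
     lin_fun sc \<phi> \<and> (\<exists>a. \<phi> a \<noteq> 0) \<and>
     (\<forall>a b. slice2 sc \<phi> (rep sc mul (mmul (\<Delta> a) (tens_one mul b))) = sc (\<phi> a) b) \<and>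
     (\<forall>a b. slice2 sc \<phi> (rep sc mul (mmul (tens_one mul b) (\<Delta> a))) = sc (\<phi> a) b)"

end

theory Submission
  imports Defs "HOL-Library.Function_Algebras"
begin

(*
  If some finite family a\<^sub>1, ..., a\<^sub>n had no right local unit, linear algebra in A\<^sup>n would give
  functionals \<omega>\<^sub>i with \<Sum> \<omega>\<^sub>i(a\<^sub>i e) = 0 for all e but \<Sum> \<omega>\<^sub>i(a\<^sub>i) \<noteq> 0.  Pick b with \<phi>(b) \<noteq> 0 and
  put y = \<Sum> (\<omega>\<^sub>i \<otimes> \<iota>)((a\<^sub>i \<otimes> 1)\<Delta>(b)).  For every q,
  y q = \<Sum> (\<omega>\<^sub>i \<otimes> \<iota>)((a\<^sub>i \<otimes> 1)\<Delta>(b)(1 \<otimes> q)) = \<Sum> (\<omega>\<^sub>i(a\<^sub>i \<cdot>) \<otimes> \<iota>)(\<Delta>(b)(1 \<otimes> q)) = 0,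
  so y = 0 by non-degeneracy; but left invariance gives \<phi>(y) = \<phi>(b) \<Sum> \<omega>\<^sub>i(a\<^sub>i) \<noteq> 0.
  The opposite algebra yields a left local unit, and one-sided units e\<^sub>L, e\<^sub>R combine to the
  two-sided unit e\<^sub>L + e\<^sub>R - e\<^sub>R e\<^sub>L.
*)

section \<open>Linear functionals\<close>

lemma vector_space_complex_mult: "vector_space ((*) :: complex \<Rightarrow> complex \<Rightarrow> complex)"
  by unfold_locales (auto simp: algebra_simps)

lemma
  assumes "lin_fun sc f"
  shows lin_fun_add: "f (x + y) = f x + f y"
    and lin_fun_scale: "f (sc c x) = c * f x"
  using assms unfolding lin_fun_def Vector_Spaces.linear_iff by blast+

lemma lin_fun_zero: "lin_fun sc f \<Longrightarrow> f 0 = 0"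
  using lin_fun_add[of sc f 0 0] by simp

lemma lin_fun_diff: "lin_fun sc f \<Longrightarrow> f (x - y) = f x - f y"
  using lin_fun_add[of sc f "x - y" y] by (simp add: algebra_simps)

lemma lin_fun_sum: "lin_fun sc f \<Longrightarrow> f (sum g A) = (\<Sum>a\<in>A. f (g a))"
  using sum_comp_morphism[of f g A] by (simp add: lin_fun_zero lin_fun_add comp_def)

lemma exists_linear_functional_separating:
  fixes s :: "complex \<Rightarrow> 'b::ab_group_add \<Rightarrow> 'b"
  assumes vs: "vector_space s" and v: "v \<notin> module.span s S"
  shows "\<exists>f. Vector_Spaces.linear s ((*) :: complex \<Rightarrow> complex \<Rightarrow> complex) f \<and> f v \<noteq> 0 \<and> (\<forall>x\<in>S. f x = 0)"
proof -
  interpret V: vector_space s by fact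
  interpret P: vector_space_pair s "(*) :: complex \<Rightarrow> complex \<Rightarrow> complex"
    using vs vector_space_complex_mult by (simp add: vector_space_pair_def)
  obtain B where B: "B \<subseteq> S" "V.independent B" "S \<subseteq> V.span B"
    using V.maximal_independent_subset by blast
  have "V.span B = V.span S"
    using B by (metis V.span_mono V.span_span subset_antisym)
  then have vB: "v \<notin> V.span B" using v by simp
  then have "v \<notin> B" using V.span_base by blast
  obtain f where f: "Vector_Spaces.linear s (*) f" "\<forall>x\<in>insert v B. f x = (if x = v then 1 else 0)"
    using P.linear_independent_extend[OF V.independent_insertI[OF vB B(2)], of "\<lambda>x. if x = v then 1 else 0"]
    by blast
  have "f x = 0" if "x \<in> S" for x
    using P.linear_eq_on[OF f(1) P.linear_zero, of x B] B(3) f(2) \<open>v \<notin> B\<close> that by fastforce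
  then show ?thesis using f by auto
qed

lemma zero_if_functionals_vanish:
  assumes "vector_space sc" and "\<And>f. lin_fun sc f \<Longrightarrow> f w = 0"
  shows "w = 0"
proof (rule ccontr)
  interpret vector_space sc by fact
  assume "w \<noteq> 0"
  then have "w \<notin> span {}" by simp
  then show False
    using exists_linear_functional_separating[OF assms(1)] assms(2) unfolding lin_fun_def by blast
qed

lemma additive_eq_sum_of_components:
  fixes f :: "('i \<Rightarrow> 'b::comm_monoid_add) \<Rightarrow> 'c::comm_monoid_add"
  assumes zero: "f 0 = 0" and add: "\<And>x y. f (x + y) = f x + f y"
    and "finite I" and "\<And>i. i \<notin> I \<Longrightarrow> w i = 0"
  shows "f w = (\<Sum>i\<in>I. f (\<lambda>j. if j = i then w i else 0))"
  using assms(3,4)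
proof (induction I arbitrary: w rule: finite_induct)
  case empty
  then have "w = 0" by (simp add: fun_eq_iff)
  then show ?case by (simp only: zero sum.empty)
next
  case (insert i I)
  have "w = w(i := 0) + (\<lambda>j. if j = i then w i else 0)"
    by (simp add: fun_eq_iff)
  then have "f w = f (w(i := 0)) + f (\<lambda>j. if j = i then w i else 0)"
    by (metis add)
  also have "f (w(i := 0)) = (\<Sum>k\<in>I. f (\<lambda>j. if j = k then (w(i := 0)) k else 0))"
    using insert by (intro insert.IH) auto
  also have "\<dots> = (\<Sum>k\<in>I. f (\<lambda>j. if j = k then w k else 0))"
  proof (rule sum.cong[OF refl])
    fix k assume "k \<in> I"
    then have "(w(i := 0)) k = w k" using insert.hyps(2) by auto
    then show "f (\<lambda>j. if j = k then (w(i := 0)) k else 0) = f (\<lambda>j. if j = k then w k else 0)"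
      by (simp only:)
  qed
  finally show ?case
    using insert.hyps by (simp add: add.commute)
qed

lemma vector_space_pointwise:
  assumes "vector_space sc"
  shows "vector_space (\<lambda>c (w :: 'i \<Rightarrow> 'a::ab_group_add) i. sc c (w i))"
proof -
  interpret vector_space sc by fact
  show ?thesis
    by unfold_locales (simp_all add: fun_eq_iff scale_right_distrib scale_left_distrib)
qed

lemma lin_fun_component:
  assumes vs: "vector_space sc" and f: "Vector_Spaces.linear (\<lambda>c w j. sc c (w j)) (*) f"
  shows "lin_fun sc (\<lambda>x. f (\<lambda>j. if j = i then x else 0))"
proof -
  interpret vector_space sc by fact
  have "Vector_Spaces.linear sc (\<lambda>c w j. sc c (w j)) (\<lambda>x j. if j = i then x else 0)"
    unfolding Vector_Spaces.linear_iff using vs vector_space_pointwise[OF vs]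
    by (simp add: fun_eq_iff)
  from Vector_Spaces.linear_compose[OF this f] show ?thesis
    unfolding lin_fun_def comp_def .
qed

section \<open>Non-degenerate algebras\<close>

lemma
  assumes "nd_algebra sc mul"
  shows nd_vector_space: "vector_space sc"
    and nd_mul_add_left: "mul (x + y) z = mul x z + mul y z"
    and nd_mul_add_right: "mul x (y + z) = mul x y + mul x z"
    and nd_mul_scale_left: "mul (sc c x) y = sc c (mul x y)"
    and nd_mul_scale_right: "mul x (sc c y) = sc c (mul x y)"
    and nd_mul_assoc: "mul (mul x y) z = mul x (mul y z)"
    and nd_zero_if_mul_right_zero: "(\<And>b. mul a b = 0) \<Longrightarrow> a = 0"
    and nd_zero_if_mul_left_zero: "(\<And>b. mul b a = 0) \<Longrightarrow> a = 0"
  using assms unfolding nd_algebra_def by (elim conjE; iprover)+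

lemma nd_mul_zero_left: "nd_algebra sc mul \<Longrightarrow> mul 0 x = 0"
  using nd_mul_add_left[of sc mul 0 0 x] by simp

lemma nd_mul_diff_left: "nd_algebra sc mul \<Longrightarrow> mul (x - y) z = mul x z - mul y z"
  using nd_mul_add_left[of sc mul "x - y" y z] by (simp add: algebra_simps)

lemma nd_mul_diff_right: "nd_algebra sc mul \<Longrightarrow> mul z (x - y) = mul z x - mul z y"
  using nd_mul_add_right[of sc mul z "x - y" y] by (simp add: algebra_simps)

lemma nd_algebra_opposite:
  assumes nd: "nd_algebra sc mul"
  shows "nd_algebra sc (\<lambda>x y. mul y x)"
  unfolding nd_algebra_def
  using nd_vector_space[OF nd] nd_mul_add_left[OF nd] nd_mul_add_right[OF nd]
    nd_mul_scale_left[OF nd] nd_mul_scale_right[OF nd] nd_mul_assoc[OF nd, symmetric]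
    nd_zero_if_mul_right_zero[OF nd] nd_zero_if_mul_left_zero[OF nd]
  by blast

lemma lin_fun_comp_mul_right:
  assumes nd: "nd_algebra sc mul" and "lin_fun sc f"
  shows "lin_fun sc (\<lambda>x. f (mul x p))"
  using assms(2) unfolding lin_fun_def Vector_Spaces.linear_iff
  by (simp add: nd_mul_add_left[OF nd] nd_mul_scale_left[OF nd])

lemma lin_fun_comp_mul_left:
  assumes nd: "nd_algebra sc mul" and "lin_fun sc f"
  shows "lin_fun sc (\<lambda>x. f (mul p x))"
  using assms(2) unfolding lin_fun_def Vector_Spaces.linear_iff
  by (simp add: nd_mul_add_right[OF nd] nd_mul_scale_right[OF nd])

lemma nd_eq_if_functionals_of_products_eq:
  assumes nd: "nd_algebra sc mul" and eq: "\<And>h p. lin_fun sc h \<Longrightarrow> h (mul u p) = h (mul v p)"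
  shows "u = v"
proof -
  have "mul (u - v) p = 0" for p
    by (rule zero_if_functionals_vanish[OF nd_vector_space[OF nd]])
      (simp add: nd_mul_diff_left[OF nd] lin_fun_diff eq)
  then show ?thesis
    using nd_zero_if_mul_right_zero[OF nd, of "u - v"] by simp
qed

section \<open>Slices and tensors\<close>

definition slice1 :: "(complex \<Rightarrow> 'a::ab_group_add \<Rightarrow> 'a) \<Rightarrow> ('a \<Rightarrow> complex) \<Rightarrow> 'a tens \<Rightarrow> 'a" where
  "slice1 sc f t = sum_list (map (\<lambda>(x, y). sc (f x) y) t)"

abbreviation tpair :: "('a \<Rightarrow> complex) \<Rightarrow> ('a \<Rightarrow> complex) \<Rightarrow> 'a tens \<Rightarrow> complex" where
  "tpair f g t \<equiv> sum_list (map (\<lambda>(x, y). f x * g y) t)"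

lemma lin_fun_slice1: "lin_fun sc g \<Longrightarrow> g (slice1 sc f t) = tpair f g t"
  by (induction t) (auto simp: slice1_def lin_fun_zero lin_fun_add lin_fun_scale)

lemma lin_fun_slice2: "lin_fun sc f \<Longrightarrow> f (slice2 sc g t) = tpair f g t"
  by (induction t) (auto simp: slice2_def lin_fun_zero lin_fun_add lin_fun_scale mult.commute)

lemma tmul_simple_right: "tmul mul t [(p, q)] = map (\<lambda>(x, y). (mul x p, mul y q)) t"
  by (induction t) (auto simp: tmul_def)

lemma tmul_simple_left: "tmul mul [(p, q)] t = map (\<lambda>(x, y). (mul p x, mul q y)) t"
  by (simp add: tmul_def case_prod_beta)

lemma teq_sym: "teq sc s t \<Longrightarrow> teq sc t s"
  unfolding teq_def by metis

lemma teq_trans: "teq sc s t \<Longrightarrow> teq sc t u \<Longrightarrow> teq sc s u"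
  unfolding teq_def by metis

lemma teq_map_mul_left:
  assumes nd: "nd_algebra sc mul" and "teq sc s t"
  shows "teq sc (map (\<lambda>(y, z). (mul x y, z)) s) (map (\<lambda>(y, z). (mul x y, z)) t)"
  unfolding teq_def
proof (intro allI impI)
  fix f g assume "lin_fun sc f \<and> lin_fun sc g"
  then have "tpair (\<lambda>y. f (mul x y)) g s = tpair (\<lambda>y. f (mul x y)) g t"
    using assms(2) lin_fun_comp_mul_left[OF nd] unfolding teq_def by blast
  then show "tpair f g (map (\<lambda>(y, z). (mul x y, z)) s) = tpair f g (map (\<lambda>(y, z). (mul x y, z)) t)"
    by (simp add: comp_def split_def)
qed

lemma teq_map_mul_right:
  assumes nd: "nd_algebra sc mul" and "teq sc s t"
  shows "teq sc (map (\<lambda>(y, z). (mul y x, z)) s) (map (\<lambda>(y, z). (mul y x, z)) t)"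
  using teq_map_mul_left[OF nd_algebra_opposite[OF nd] assms(2)] by simp

text \<open>Non-degeneracy of A \<otimes> A, proved one leg at a time by slicing.\<close>

lemma teq_if_tmul_simple_right:
  assumes nd: "nd_algebra sc mul"
    and simple: "\<And>p q. teq sc (tmul mul s [(p, q)]) (tmul mul t [(p, q)])"
  shows "teq sc s t"
  unfolding teq_def
proof (intro allI impI)
  have products: "tpair (\<lambda>x. f (mul x p)) (\<lambda>y. g (mul y q)) s = tpair (\<lambda>x. f (mul x p)) (\<lambda>y. g (mul y q)) t"
    if "lin_fun sc f" "lin_fun sc g" for f g p q
    using simple[of p q] that unfolding teq_def by (simp add: tmul_simple_right comp_def split_def)
  have first_leg: "tpair f (\<lambda>y. g (mul y q)) s = tpair f (\<lambda>y. g (mul y q)) t"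
    if f: "lin_fun sc f" and g: "lin_fun sc g" for f g q
  proof -
    let ?k = "\<lambda>y. g (mul y q)"
    have "slice2 sc ?k s = slice2 sc ?k t"
    proof (rule nd_eq_if_functionals_of_products_eq[OF nd])
      fix h p assume h: "lin_fun sc h"
      show "h (mul (slice2 sc ?k s) p) = h (mul (slice2 sc ?k t) p)"
        using products[OF h g, of p q] lin_fun_slice2[OF lin_fun_comp_mul_right[OF nd h]] by simp
    qed
    then show ?thesis
      using lin_fun_slice2[OF f] by metis
  qed
  fix f g assume fg: "lin_fun sc f \<and> lin_fun sc g"
  have "slice1 sc f s = slice1 sc f t"
  proof (rule nd_eq_if_functionals_of_products_eq[OF nd])
    fix h q assume h: "lin_fun sc h"
    show "h (mul (slice1 sc f s) q) = h (mul (slice1 sc f t) q)"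
      using first_leg[of f h q] fg h lin_fun_slice1[OF lin_fun_comp_mul_right[OF nd h]] by simp
  qed
  then show "tpair f g s = tpair f g t"
    using fg lin_fun_slice1[of sc g f s] lin_fun_slice1[of sc g f t] by simp
qed

lemma teq_if_tmul_simple_left:
  assumes nd: "nd_algebra sc mul"
    and simple: "\<And>p q. teq sc (tmul mul [(p, q)] s) (tmul mul [(p, q)] t)"
  shows "teq sc s t"
proof (rule teq_if_tmul_simple_right[OF nd_algebra_opposite[OF nd]])
  fix p q
  show "teq sc (tmul (\<lambda>x y. mul y x) s [(p, q)]) (tmul (\<lambda>x y. mul y x) t [(p, q)])"
    using simple[of p q] by (simp add: tmul_simple_right tmul_simple_left)
qed

lemma tens_one_mult_one_tens_assoc:
  assumes nd: "nd_algebra sc mul"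
    and t: "represents sc mul t (mmul (tens_one mul x) m)"
    and T: "represents sc mul T (mmul m (one_tens mul q))"
  shows "teq sc (map (\<lambda>(u, v). (u, mul v q)) t) (map (\<lambda>(y, z). (mul x y, z)) T)"
proof (rule teq_if_tmul_simple_right[OF nd])
  fix p q'
  have "teq sc (tmul mul t [(p, mul q q')]) (map (\<lambda>(y, z). (mul x y, z)) (fst m [(p, mul q q')]))"
    using t unfolding represents_def by (auto simp: mmul_def tens_one_def intro: teq_sym)
  moreover have "teq sc (fst m [(p, mul q q')]) (tmul mul T [(p, q')])"
    using spec[OF T[unfolded represents_def], of "[(p, q')]"] by (simp add: mmul_def one_tens_def)
  ultimately have "teq sc (tmul mul t [(p, mul q q')]) (map (\<lambda>(y, z). (mul x y, z)) (tmul mul T [(p, q')]))"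
    using teq_trans teq_map_mul_left[OF nd] by blast
  then show "teq sc (tmul mul (map (\<lambda>(u, v). (u, mul v q)) t) [(p, q')])
                    (tmul mul (map (\<lambda>(y, z). (mul x y, z)) T) [(p, q')])"
    by (simp add: tmul_simple_right nd_mul_assoc[OF nd] split_def comp_def)
qed

lemma one_tens_mult_tens_one_assoc:
  assumes nd: "nd_algebra sc mul"
    and t: "represents sc mul t (mmul m (tens_one mul x))"
    and T: "represents sc mul T (mmul (one_tens mul q) m)"
  shows "teq sc (map (\<lambda>(u, v). (u, mul q v)) t) (map (\<lambda>(y, z). (mul y x, z)) T)"
proof (rule teq_if_tmul_simple_left[OF nd])
  fix p q'
  have "teq sc (tmul mul [(p, mul q' q)] t) (map (\<lambda>(y, z). (mul y x, z)) (snd m [(p, mul q' q)]))"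
    using t unfolding represents_def by (auto simp: mmul_def tens_one_def intro: teq_sym)
  moreover have "teq sc (snd m [(p, mul q' q)]) (tmul mul [(p, q')] T)"
    using spec[OF T[unfolded represents_def], of "[(p, q')]"] by (simp add: mmul_def one_tens_def)
  ultimately have "teq sc (tmul mul [(p, mul q' q)] t) (map (\<lambda>(y, z). (mul y x, z)) (tmul mul [(p, q')] T))"
    using teq_trans teq_map_mul_right[OF nd] by blast
  then show "teq sc (tmul mul [(p, q')] (map (\<lambda>(u, v). (u, mul q v)) t))
                    (tmul mul [(p, q')] (map (\<lambda>(y, z). (mul y x, z)) T))"
    by (simp add: tmul_simple_left nd_mul_assoc[OF nd] split_def comp_def)
qed

lemma rep_represents: "in_tens sc mul m \<Longrightarrow> represents sc mul (rep sc mul m) m"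
  unfolding in_tens_def rep_def by (rule someI_ex)

section \<open>Local units\<close>

lemma right_unit_by_duality:
  fixes sc :: "complex \<Rightarrow> 'a::ab_group_add \<Rightarrow> 'a"
  assumes nd: "nd_algebra sc mul" and "finite F"
    and dual: "\<And>\<omega>. (\<And>a. a \<in> F \<Longrightarrow> lin_fun sc (\<omega> a)) \<Longrightarrow> (\<And>e. (\<Sum>a\<in>F. \<omega> a (mul a e)) = 0)
                  \<Longrightarrow> (\<Sum>a\<in>F. \<omega> a a) = 0"
  shows "\<exists>e. \<forall>a\<in>F. mul a e = a"
proof (rule ccontr)
  assume no_unit: "\<nexists>e. \<forall>a\<in>F. mul a e = a"
  let ?scf = "\<lambda>c (w :: 'a \<Rightarrow> 'a) a. sc c (w a)"
  have V: "vector_space sc" and W: "vector_space ?scf"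
    using nd_vector_space[OF nd] vector_space_pointwise by blast+
  interpret V: vector_space sc by (rule V)
  interpret P: vector_space_pair sc ?scf using V W by (simp add: vector_space_pair_def)
  interpret Q: vector_space_pair ?scf "(*) :: complex \<Rightarrow> complex \<Rightarrow> complex"
    using W vector_space_complex_mult by (simp add: vector_space_pair_def)
  (* A\<^sup>F is modelled by the functions vanishing outside F. *)
  define L where "L e = (\<lambda>a. if a \<in> F then mul a e else 0)" for e
  have "Vector_Spaces.linear sc ?scf L"
    unfolding Vector_Spaces.linear_iff L_def using V W
    by (simp add: fun_eq_iff nd_mul_add_right[OF nd] nd_mul_scale_right[OF nd])
  then have "P.vs2.subspace (range L)"
    by (rule P.linear_subspace_image[OF _ V.subspace_UNIV])
  moreover have "(\<lambda>a. if a \<in> F then a else 0) \<notin> range L"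
    using no_unit unfolding L_def by (auto simp: fun_eq_iff) metis
  ultimately have "(\<lambda>a. if a \<in> F then a else 0) \<notin> P.vs2.span (range L)"
    using P.vs2.span_eq_iff by blast
  then obtain f where f: "Vector_Spaces.linear ?scf (*) f"
    and f_id: "f (\<lambda>a. if a \<in> F then a else 0) \<noteq> 0" and f_L: "\<forall>w\<in>range L. f w = 0"
    using exists_linear_functional_separating[OF W] by blast
  define \<omega> where "\<omega> a x = f (\<lambda>j. if j = a then x else 0)" for a x
  have decompose: "f w = (\<Sum>a\<in>F. \<omega> a (w a))" if "\<And>a. a \<notin> F \<Longrightarrow> w a = 0" for w
    unfolding \<omega>_def using \<open>finite F\<close> that
    by (intro additive_eq_sum_of_components Q.linear_0[OF f] Q.linear_add[OF f])
  have "(\<Sum>a\<in>F. \<omega> a a) = 0"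
  proof (rule dual[of \<omega>])
    show "lin_fun sc (\<omega> a)" for a
      unfolding \<omega>_def by (rule lin_fun_component[OF V f])
    show "(\<Sum>a\<in>F. \<omega> a (mul a e)) = 0" for e
      using f_L decompose[of "L e"] by (simp add: L_def cong: sum.cong)
  qed
  then show False
    using f_id decompose[of "\<lambda>a. if a \<in> F then a else 0"] by (simp cong: sum.cong)
qed

lemma sum_slices_eq_zero:
  assumes nd: "nd_algebra sc mul"
    and \<omega>: "\<And>a. a \<in> F \<Longrightarrow> lin_fun sc (\<omega> a)"
    and annihilates: "\<And>e. (\<Sum>a\<in>F. \<omega> a (mul a e)) = 0"
    and assoc: "\<And>a q. teq sc (map (\<lambda>(u, v). (u, mul v q)) (t a)) (map (\<lambda>(x, y). (mul a x, y)) (T q))"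
  shows "(\<Sum>a\<in>F. slice1 sc (\<omega> a) (t a)) = 0"
proof (rule nd_eq_if_functionals_of_products_eq[OF nd])
  fix g q assume g: "lin_fun sc g"
  have "g (mul (\<Sum>a\<in>F. slice1 sc (\<omega> a) (t a)) q) = (\<Sum>a\<in>F. g (mul (slice1 sc (\<omega> a) (t a)) q))"
    by (rule lin_fun_sum[OF lin_fun_comp_mul_right[OF nd g]])
  also have "\<dots> = (\<Sum>a\<in>F. tpair (\<omega> a) (\<lambda>v. g (mul v q)) (t a))"
    using lin_fun_slice1[OF lin_fun_comp_mul_right[OF nd g]] by simp
  also have "\<dots> = (\<Sum>a\<in>F. tpair (\<omega> a) g (map (\<lambda>(x, y). (mul a x, y)) (T q)))"
  proof (rule sum.cong[OF refl])
    fix a assume "a \<in> F"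
    have "tpair (\<omega> a) g (map (\<lambda>(u, v). (u, mul v q)) (t a))
        = tpair (\<omega> a) g (map (\<lambda>(x, y). (mul a x, y)) (T q))"
      using assoc[where a = a and q = q] \<omega>[OF \<open>a \<in> F\<close>] g unfolding teq_def by blast
    then show "tpair (\<omega> a) (\<lambda>v. g (mul v q)) (t a) = tpair (\<omega> a) g (map (\<lambda>(x, y). (mul a x, y)) (T q))"
      by (simp add: comp_def split_def)
  qed
  also have "\<dots> = (\<Sum>a\<in>F. \<omega> a (mul a (slice2 sc g (T q))))"
  proof (rule sum.cong[OF refl])
    fix a assume "a \<in> F"
    show "tpair (\<omega> a) g (map (\<lambda>(x, y). (mul a x, y)) (T q)) = \<omega> a (mul a (slice2 sc g (T q)))"
      using lin_fun_slice2[OF lin_fun_comp_mul_left[OF nd \<omega>[OF \<open>a \<in> F\<close>]]]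
      by (simp add: comp_def split_def)
  qed
  also have "\<dots> = 0"
    by (rule annihilates)
  finally show "g (mul (\<Sum>a\<in>F. slice1 sc (\<omega> a) (t a)) q) = g (mul 0 q)"
    by (simp add: nd_mul_zero_left[OF nd] lin_fun_zero[OF g])
qed

lemma right_unit_from_left_integral:
  assumes nd: "nd_algebra sc mul" and "finite F"
    and \<phi>: "lin_fun sc \<phi>" and \<phi>b: "\<phi> b \<noteq> 0"
    and slice: "\<And>a. slice2 sc \<phi> (t a) = sc (\<phi> b) a"
    and assoc: "\<And>a q. teq sc (map (\<lambda>(u, v). (u, mul v q)) (t a)) (map (\<lambda>(x, y). (mul a x, y)) (T q))"
  shows "\<exists>e. \<forall>a\<in>F. mul a e = a"
proof (rule right_unit_by_duality[OF nd \<open>finite F\<close>])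
  fix \<omega> assume \<omega>: "\<And>a. a \<in> F \<Longrightarrow> lin_fun sc (\<omega> a)"
    and annihilates: "\<And>e. (\<Sum>a\<in>F. \<omega> a (mul a e)) = 0"
  have "0 = \<phi> (\<Sum>a\<in>F. slice1 sc (\<omega> a) (t a))"
    using sum_slices_eq_zero[OF nd \<omega> annihilates assoc] lin_fun_zero[OF \<phi>] by simp
  also have "\<dots> = (\<Sum>a\<in>F. \<omega> a (slice2 sc \<phi> (t a)))"
    unfolding lin_fun_sum[OF \<phi>] lin_fun_slice1[OF \<phi>]
    by (intro sum.cong refl) (simp add: lin_fun_slice2[OF \<omega>])
  also have "\<dots> = \<phi> b * (\<Sum>a\<in>F. \<omega> a a)"
    unfolding sum_distrib_left slice by (intro sum.cong refl) (simp add: lin_fun_scale[OF \<omega>])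
  finally show "(\<Sum>a\<in>F. \<omega> a a) = 0"
    using \<phi>b by simp
qed

lemma two_sided_unit_from_one_sided:
  assumes nd: "nd_algebra sc mul"
    and right: "mul a e\<^sub>R = a" and left: "mul e\<^sub>L a = a"
  shows "mul a (e\<^sub>L + e\<^sub>R - mul e\<^sub>R e\<^sub>L) = a" and "mul (e\<^sub>L + e\<^sub>R - mul e\<^sub>R e\<^sub>L) a = a"
  (* In the unitization, 1 - e = (1 - e\<^sub>R)(1 - e\<^sub>L). *)
  using right left
  by (simp_all add: nd_mul_add_left[OF nd] nd_mul_add_right[OF nd] nd_mul_diff_left[OF nd]
      nd_mul_diff_right[OF nd] nd_mul_assoc[OF nd, of e\<^sub>R e\<^sub>L a] nd_mul_assoc[OF nd, of a e\<^sub>R e\<^sub>L, symmetric])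

theorem proposition1p6:
  fixes sc :: "complex \<Rightarrow> 'a::ab_group_add \<Rightarrow> 'a"
    and mul :: "'a \<Rightarrow> 'a \<Rightarrow> 'a"
    and \<Delta> :: "'a \<Rightarrow> 'a mult2"
    and \<phi> :: "'a \<Rightarrow> complex"
    and F :: "'a set"
  assumes "nd_algebra sc mul"
    and "regular_comult sc mul \<Delta>"
    and "left_integral sc mul \<Delta> \<phi>"
    and "finite F"
  shows "\<exists>e. \<forall>a\<in>F. mul a e = a \<and> mul e a = a"
proof -
  note nd = assms(1)
  have \<phi>: "lin_fun sc \<phi>"
    and slices: "\<And>a x. slice2 sc \<phi> (rep sc mul (mmul (tens_one mul x) (\<Delta> a))) = sc (\<phi> a) x"
                "\<And>a x. slice2 sc \<phi> (rep sc mul (mmul (\<Delta> a) (tens_one mul x))) = sc (\<phi> a) x"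
    using assms(3) unfolding left_integral_def by blast+
  obtain b where \<phi>b: "\<phi> b \<noteq> 0"
    using assms(3) unfolding left_integral_def by blast
  have reps: "\<And>x. represents sc mul (rep sc mul (mmul (tens_one mul x) (\<Delta> b))) (mmul (tens_one mul x) (\<Delta> b))"
    "\<And>q. represents sc mul (rep sc mul (mmul (\<Delta> b) (one_tens mul q))) (mmul (\<Delta> b) (one_tens mul q))"
    "\<And>x. represents sc mul (rep sc mul (mmul (\<Delta> b) (tens_one mul x))) (mmul (\<Delta> b) (tens_one mul x))"
    "\<And>q. represents sc mul (rep sc mul (mmul (one_tens mul q) (\<Delta> b))) (mmul (one_tens mul q) (\<Delta> b))"
    using assms(2) unfolding regular_comult_def by (blast intro: rep_represents)+
  obtain e\<^sub>R where "\<forall>a\<in>F. mul a e\<^sub>R = a"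
    using right_unit_from_left_integral[OF nd \<open>finite F\<close> \<phi> \<phi>b slices(1)
        tens_one_mult_one_tens_assoc[OF nd reps(1,2)]] by blast
  moreover obtain e\<^sub>L where "\<forall>a\<in>F. mul e\<^sub>L a = a"
    using right_unit_from_left_integral[OF nd_algebra_opposite[OF nd] \<open>finite F\<close> \<phi> \<phi>b slices(2)
        one_tens_mult_tens_one_assoc[OF nd reps(3,4)]] by blast
  ultimately show ?thesis
    using two_sided_unit_from_one_sided[OF nd] by blast
qed

end
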